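(* In the setting of the context, let $\sigma_n^{*2}$ be the optimal reverse variance at step $n\in\{1,\dots,N\}$. Then $$\lambda_n^2\le\sigma_n^{*2}\le\lambda_n^2+\Big(\sqrt{\tfrac{\overline{\beta}_n}{\alpha_n}}-\sqrt{\overline{\beta}_{n-1}-\lambda_n^2}\Big)^2.$$ If moreover $q(\mathbf{x}_0)$ is supported in $[a,b]^d$, then $$\sigma_n^{*2}\le\lambda_n^2+\Big(\sqrt{\overline{\alpha}_{n-1}}-\sqrt{\overline{\beta}_{n-1}-\lambda_n^2}\cdot\sqrt{\tfrac{\overline{\alpha}_n}{\overline{\beta}_n}}\Big)^2\Big(\frac{b-a}{2}\Big)^2.$$
   Context: Let $d,N\ge 1$. Let $\beta_1,\dots,\beta_N\in(0,1)$, $\alpha_n:=1-\beta_n$, $\overline{\alpha}_n:=\prod_{i=1}^n\alpha_i$, $\overline{\beta}_n:=1-\overline{\alpha}_n$, with $\overline{\alpha}_0:=1$, $\overline{\beta}_0:=0$. Let $\lambda_n\ge0$ with $\lambda_n^2\le\overline{\beta}_{n-1}$ (so $\lambda_1=0$). Let $q(\mathbf{x}_0)$ be a probability density on $\mathbb{R}^d$ with finite second moments. Define $\tilde{\boldsymbol{\mu}}_n(\mathbf{x}_n,\mathbf{x}_0):=\sqrt{\overline{\alpha}_{n-1}}\mathbf{x}_0+\sqrt{\overline{\beta}_{n-1}-\lambda_n^2}\,\frac{\mathbf{x}_n-\sqrt{\overline{\alpha}_n}\mathbf{x}_0}{\sqrt{\overline{\beta}_n}}$ and the forward process $q(\mathbf{x}_{0:N})=q(\mathbf{x}_0)q(\mathbf{x}_N|\mathbf{x}_0)\prod_{n=2}^Nq(\mathbf{x}_{n-1}|\mathbf{x}_n,\mathbf{x}_0)$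 with $q(\mathbf{x}_N|\mathbf{x}_0)=\mathcal{N}(\sqrt{\overline{\alpha}_N}\mathbf{x}_0,\overline{\beta}_N\mathbf{I})$ and $q(\mathbf{x}_{n-1}|\mathbf{x}_n,\mathbf{x}_0)=\mathcal{N}(\tilde{\boldsymbol{\mu}}_n(\mathbf{x}_n,\mathbf{x}_0),\lambda_n^2\mathbf{I})$. The reverse model is $p(\mathbf{x}_{0:N})=p(\mathbf{x}_N)\prod_{n=1}^Np(\mathbf{x}_{n-1}|\mathbf{x}_n)$, $p(\mathbf{x}_N)=\mathcal{N}(\mathbf{0},\mathbf{I})$, $p(\mathbf{x}_{n-1}|\mathbf{x}_n)=\mathcal{N}(\boldsymbol{\mu}_n(\mathbf{x}_n),\sigma_n^2\mathbf{I})$. The optimal reverse variances $\sigma_n^{*2}$ are the variances of a minimizer of $D_{\mathrm{KL}}(q(\mathbf{x}_{0:N})\|p(\mathbf{x}_{0:N}))$ over all $\{\boldsymbol{\mu}_n,\sigma_n^2\}_{n=1}^N$; they equal $\sigma_n^{*2}=\mathbb{E}_{q_n(\mathbf{x}_n)}\mathrm{tr}(\mathrm{Cov}_{q(\mathbf{x}_{n-1}|\mathbf{x}_n)}[\mathbf{x}_{n-1}])/d$, where $q_n$ is the marginal of $\mathbf{x}_n$. *)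

theory Defs
  imports "HOL-Probability.Probability"
begin

text \<open>Noise schedule quantities. Indices of beta, lambda range over 1..N.\<close>

definition alpha_s :: "(nat \<Rightarrow> real) \<Rightarrow> nat \<Rightarrow> real" where
  "alpha_s \<beta> n = 1 - \<beta> n"

definition alpha_bar :: "(nat \<Rightarrow> real) \<Rightarrow> nat \<Rightarrow> real" where
  "alpha_bar \<beta> n = (\<Prod>i=1..n. alpha_s \<beta> i)"

definition beta_bar :: "(nat \<Rightarrow> real) \<Rightarrow> nat \<Rightarrow> real" where
  "beta_bar \<beta> n = 1 - alpha_bar \<beta> n"

definition gauss :: "real^'d \<Rightarrow> real \<Rightarrow> (real^'d) measure" where
  "gauss m s2 = (if s2 = 0 then return borel m
     else density lborel (\<lambda>x. ennreal ((2 * pi * s2) powr (- real CARD('d) / 2)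
                                 * exp (- (norm (x - m))\<^sup>2 / (2 * s2)))))"

text \<open>Mean of q(x_{n-1} | x_n, x_0).\<close>

definition mu_tilde :: "(nat \<Rightarrow> real) \<Rightarrow> (nat \<Rightarrow> real) \<Rightarrow> nat \<Rightarrow> real^'d \<Rightarrow> real^'d \<Rightarrow> real^'d" where
  "mu_tilde \<beta> lam n xn x0 =
     sqrt (alpha_bar \<beta> (n - 1)) *\<^sub>R x0
     + (sqrt (beta_bar \<beta> (n - 1) - (lam n)\<^sup>2) / sqrt (beta_bar \<beta> n)) *\<^sub>R
         (xn - sqrt (alpha_bar \<beta> n) *\<^sub>R x0)"

text \<open>Trajectories x_{0:N} are represented as functions nat \<Rightarrow> real^'d (index k = x_k;
  indices > N are irrelevant).\<close>

abbreviation traj_space :: "(nat \<Rightarrow> real^'d) measure" where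
  "traj_space \<equiv> PiM UNIV (\<lambda>_. borel)"

definition fwd_init :: "(real^'d \<Rightarrow> real) \<Rightarrow> (nat \<Rightarrow> real) \<Rightarrow> nat \<Rightarrow> (nat \<Rightarrow> real^'d) measure" where
  "fwd_init q \<beta> N =
     bind (density lborel (\<lambda>x. ennreal (q x)))
       (\<lambda>x0. distr (gauss (sqrt (alpha_bar \<beta> N) *\<^sub>R x0) (beta_bar \<beta> N)) traj_space
                (\<lambda>xN. (\<lambda>k. if k = N then xN else x0)))"

text \<open>One backward-in-index step of the forward process: sample x_{m-1} ~ q(x_{m-1} | x_m, x_0).\<close>

definition fwd_step :: "(nat \<Rightarrow> real) \<Rightarrow> (nat \<Rightarrow> real) \<Rightarrow> nat \<Rightarrow> (nat \<Rightarrow> real^'d) measure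
                        \<Rightarrow> (nat \<Rightarrow> real^'d) measure" where
  "fwd_step \<beta> lam m M =
     bind M (\<lambda>x. distr (gauss (mu_tilde \<beta> lam m (x m) (x 0)) ((lam m)\<^sup>2)) traj_space
                        (\<lambda>y. x(m - 1 := y)))"

fun fwd_partial :: "(real^'d \<Rightarrow> real) \<Rightarrow> (nat \<Rightarrow> real) \<Rightarrow> (nat \<Rightarrow> real) \<Rightarrow> nat \<Rightarrow> nat
                     \<Rightarrow> (nat \<Rightarrow> real^'d) measure" where
  "fwd_partial q \<beta> lam N 0 = fwd_init q \<beta> N"
| "fwd_partial q \<beta> lam N (Suc k) = fwd_step \<beta> lam (N - k) (fwd_partial q \<beta> lam N k)"

text \<open>The forward process q(x_{0:N}) = q(x_0) q(x_N|x_0) prod_{n=2}^N q(x_{n-1}|x_n,x_0).\<close>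

definition fwd_process :: "(real^'d \<Rightarrow> real) \<Rightarrow> (nat \<Rightarrow> real) \<Rightarrow> (nat \<Rightarrow> real) \<Rightarrow> nat
                            \<Rightarrow> (nat \<Rightarrow> real^'d) measure" where
  "fwd_process q \<beta> lam N = fwd_partial q \<beta> lam N (N - 1)"

text \<open>Optimal reverse variance:
  sigma*_n^2 = E_{q_n(x_n)} tr Cov_{q(x_{n-1}|x_n)}[x_{n-1}] / d,
  where the expected trace of the conditional covariance is written as
  sum_i E[(x_{n-1,i} - E[x_{n-1,i} | x_n])^2].\<close>

definition opt_var :: "(real^'d \<Rightarrow> real) \<Rightarrow> (nat \<Rightarrow> real) \<Rightarrow> (nat \<Rightarrow> real) \<Rightarrow> nat \<Rightarrow> nat \<Rightarrow> real" where
  "opt_var q \<beta> lam N n =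
     (let Q = fwd_process q \<beta> lam N;
          F = vimage_algebra (space Q) (\<lambda>\<omega>. \<omega> n) borel
      in (\<Sum>i\<in>UNIV. \<integral>\<omega>. ((\<omega> (n - 1)) $ i
                            - real_cond_exp Q F (\<lambda>\<omega>'. (\<omega>' (n - 1)) $ i) \<omega>)\<^sup>2 \<partial>Q)
         / real CARD('d))"

end

(*
  For a predictor W of x_(n-1) that is a function of x_n, the Gaussian step
  x_(n-1) = mu_tilde (x_n, x_0) + lam_n z, with z independent of (x_0, x_n), gives
    E |x_(n-1) - W|^2 = E |mu_tilde (x_n, x_0) - W|^2 + d lam_n^2.
  d sigma*_n^2 is this error for W = E [x_(n-1) | x_n] (coordinatewise), which minimizes it over
  all square integrable predictors; hence the lower bound. Each upper bound evaluates the error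
  at a particular predictor whose residual mu_tilde - W is a multiple of a vector V with a known
  second moment: W = x_n / sqrt alpha_n leaves V = x_n - sqrt (alpha_bar_n) x_0 with
  E |V|^2 = d beta_bar_n (by downward induction along the forward process), and
  W = mu_tilde (x_n, E [x_0 | x_n]) leaves V = x_0 - E [x_0 | x_n], whose second moment is at
  most that of x_0 - ((a + b) / 2, ..., (a + b) / 2), hence at most d ((b - a) / 2)^2.
*)

theory Submission
  imports Defs
begin

section \<open>Square integrable random vectors and conditional expectation\<close>

lemma integrable_square_lincomb:
  fixes f g :: "'a \<Rightarrow> real"
  assumes [measurable]: "f \<in> borel_measurable M" "g \<in> borel_measurable M"
    and "integrable M (\<lambda>x. (f x)\<^sup>2)" "integrable M (\<lambda>x. (g x)\<^sup>2)"
  shows "integrable M (\<lambda>x. (a * f x + b * g x)\<^sup>2)"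
proof (rule Bochner_Integration.integrable_bound)
  show "integrable M (\<lambda>x. 2 * a\<^sup>2 * (f x)\<^sup>2 + 2 * b\<^sup>2 * (g x)\<^sup>2)"
    using assms by simp
  show "AE x in M. norm ((a * f x + b * g x)\<^sup>2) \<le> norm (2 * a\<^sup>2 * (f x)\<^sup>2 + 2 * b\<^sup>2 * (g x)\<^sup>2)"
  proof (intro AE_I2)
    fix x
    have "0 \<le> (a * f x - b * g x)\<^sup>2"
      by simp
    then have "(a * f x + b * g x)\<^sup>2 \<le> 2 * a\<^sup>2 * (f x)\<^sup>2 + 2 * b\<^sup>2 * (g x)\<^sup>2"
      by (simp add: power2_diff power2_sum power_mult_distrib)
    then show "norm ((a * f x + b * g x)\<^sup>2) \<le> norm (2 * a\<^sup>2 * (f x)\<^sup>2 + 2 * b\<^sup>2 * (g x)\<^sup>2)"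
      by simp
  qed
qed simp

lemma integrable_mult_of_squares:
  fixes f g :: "'a \<Rightarrow> real"
  assumes [measurable]: "f \<in> borel_measurable M" "g \<in> borel_measurable M"
    and "integrable M (\<lambda>x. (f x)\<^sup>2)" "integrable M (\<lambda>x. (g x)\<^sup>2)"
  shows "integrable M (\<lambda>x. f x * g x)"
proof (rule Bochner_Integration.integrable_bound)
  show "integrable M (\<lambda>x. (f x)\<^sup>2 + (g x)\<^sup>2)"
    using assms by simp
  show "AE x in M. norm (f x * g x) \<le> norm ((f x)\<^sup>2 + (g x)\<^sup>2)"
  proof (intro AE_I2)
    fix x
    have "2 * (\<bar>f x\<bar> * \<bar>g x\<bar>) \<le> (f x)\<^sup>2 + (g x)\<^sup>2"
      using sum_squares_bound[of "\<bar>f x\<bar>" "\<bar>g x\<bar>"] by (simp add: mult.assoc)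
    moreover have "0 \<le> \<bar>f x\<bar> * \<bar>g x\<bar>"
      by simp
    ultimately have "\<bar>f x\<bar> * \<bar>g x\<bar> \<le> (f x)\<^sup>2 + (g x)\<^sup>2"
      by linarith
    then show "norm (f x * g x) \<le> norm ((f x)\<^sup>2 + (g x)\<^sup>2)"
      by (simp add: abs_mult)
  qed
qed simp

context sigma_finite_subalgebra
begin

lemma integrable_square_real_cond_exp:
  assumes "finite_measure M" and [measurable]: "X \<in> borel_measurable M"
    and X2: "integrable M (\<lambda>x. (X x)\<^sup>2)"
  shows "integrable M (\<lambda>x. (real_cond_exp M F X x)\<^sup>2)"
proof -
  have "integrable M X"
    using finite_measure.square_integrable_imp_integrable[OF assms] .
  then have "integrable M (\<lambda>x. (\<lambda>t. t\<^sup>2) (real_cond_exp M F X x))"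
    using X2 convex_power2
    by (intro integrable_convex_cond_exp[where I=UNIV and a=0 and b=0]) simp_all
  then show ?thesis
    by simp
qed

lemma integral_sq_dist_real_cond_exp:
  assumes "finite_measure M" and X[measurable]: "X \<in> borel_measurable M"
    and X2: "integrable M (\<lambda>x. (X x)\<^sup>2)"
    and Z[measurable]: "Z \<in> borel_measurable F" and Z2: "integrable M (\<lambda>x. (Z x)\<^sup>2)"
  shows "(\<integral>x. (X x - Z x)\<^sup>2 \<partial>M)
       = (\<integral>x. (X x - real_cond_exp M F X x)\<^sup>2 \<partial>M) + (\<integral>x. (real_cond_exp M F X x - Z x)\<^sup>2 \<partial>M)"
proof -
  let ?C = "real_cond_exp M F X"
  have [measurable]: "?C \<in> borel_measurable F"
    by (rule borel_measurable_cond_exp)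
  have [measurable]: "?C \<in> borel_measurable M" "Z \<in> borel_measurable M"
    by (rule measurable_from_subalg[OF subalg], simp)+
  have C2: "integrable M (\<lambda>x. (?C x)\<^sup>2)"
    by (rule integrable_square_real_cond_exp[OF assms(1-3)])
  have XC2: "integrable M (\<lambda>x. (X x - ?C x)\<^sup>2)"
    using integrable_square_lincomb[OF X _ X2 C2, where a=1 and b="-1"] by simp
  have CZ2: "integrable M (\<lambda>x. (?C x - Z x)\<^sup>2)"
    using integrable_square_lincomb[OF _ _ C2 Z2, where a=1 and b="-1"] by simp
  have DX: "integrable M (\<lambda>x. (?C x - Z x) * X x)"
    by (rule integrable_mult_of_squares[OF _ X CZ2 X2]) simp
  have DC: "integrable M (\<lambda>x. (?C x - Z x) * ?C x)"
    by (rule integrable_mult_of_squares[OF _ _ CZ2 C2]) simp_all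
  have orth: "(\<integral>x. (?C x - Z x) * ?C x \<partial>M) = (\<integral>x. (?C x - Z x) * X x \<partial>M)"
    by (rule real_cond_exp_intg(2)[OF DX _ X]) simp
  have "(\<lambda>x. (X x - Z x)\<^sup>2)
      = (\<lambda>x. (X x - ?C x)\<^sup>2 + (?C x - Z x)\<^sup>2 + 2 * ((?C x - Z x) * X x - (?C x - Z x) * ?C x))"
    by (rule ext) (simp add: power2_eq_square algebra_simps)
  then show ?thesis
    using XC2 CZ2 DX DC orth by simp
qed

lemma integral_sq_dist_real_cond_exp_le:
  assumes "finite_measure M" and "X \<in> borel_measurable M" and "integrable M (\<lambda>x. (X x)\<^sup>2)"
    and "Z \<in> borel_measurable F" and "integrable M (\<lambda>x. (Z x)\<^sup>2)"
  shows "(\<integral>x. (X x - real_cond_exp M F X x)\<^sup>2 \<partial>M) \<le> (\<integral>x. (X x - Z x)\<^sup>2 \<partial>M)"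
  unfolding integral_sq_dist_real_cond_exp[OF assms] by simp

end

lemma power2_norm_vec_eq_sum: "(norm x)\<^sup>2 = (\<Sum>i\<in>UNIV. (x $ i)\<^sup>2)"
  for x :: "real^'n"
  by (simp add: norm_vec_def L2_set_def sum_nonneg)

lemma borel_measurable_vec_nth[measurable]: "(\<lambda>x::real^'n. x $ i) \<in> borel_measurable borel"
  by (intro borel_measurable_continuous_onI continuous_on_component continuous_on_id)

lemma borel_measurable_vec_lambda[measurable (raw)]:
  assumes "\<And>i. f i \<in> borel_measurable M"
  shows "(\<lambda>x. (\<chi> i. f i x) :: real^'n) \<in> borel_measurable M"
proof -
  have "(\<lambda>x. (\<chi> i. f i x) :: real^'n) = (\<lambda>x. \<Sum>i\<in>UNIV. f i x *\<^sub>R axis i 1)"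
    by (rule ext) (simp add: vec_eq_iff axis_def if_distrib[where f="\<lambda>t. _ * t"] cong: if_cong)
  then show ?thesis
    using assms by simp
qed

lemma integrable_component_square:
  fixes A :: "'a \<Rightarrow> real^'n"
  assumes [measurable]: "A \<in> borel_measurable M"
    and finite: "(\<integral>\<^sup>+x. ennreal ((norm (A x))\<^sup>2) \<partial>M) < \<infinity>"
  shows "integrable M (\<lambda>x. (A x $ i)\<^sup>2)"
  unfolding integrable_iff_bounded
proof
  have "(\<integral>\<^sup>+x. ennreal (norm ((A x $ i)\<^sup>2)) \<partial>M) \<le> (\<integral>\<^sup>+x. ennreal ((norm (A x))\<^sup>2) \<partial>M)"
  proof (rule nn_integral_mono)
    fix x
    have "\<bar>A x $ i\<bar> \<le> norm (A x)"
      by (rule component_le_norm_cart)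
    then have "(A x $ i)\<^sup>2 \<le> (norm (A x))\<^sup>2"
      by (metis abs_ge_zero power2_abs power_mono)
    then show "ennreal (norm ((A x $ i)\<^sup>2)) \<le> ennreal ((norm (A x))\<^sup>2)"
      by (intro ennreal_leI) simp
  qed
  then show "(\<integral>\<^sup>+x. ennreal (norm ((A x $ i)\<^sup>2)) \<partial>M) < \<infinity>"
    using finite by (rule le_less_trans)
qed simp

lemma nn_integral_norm_sq_eq_sum:
  fixes A :: "'a \<Rightarrow> real^'n"
  assumes [measurable]: "A \<in> borel_measurable M"
    and "\<And>i. integrable M (\<lambda>x. (A x $ i)\<^sup>2)"
  shows "(\<integral>\<^sup>+x. ennreal ((norm (A x))\<^sup>2) \<partial>M) = ennreal (\<Sum>i\<in>UNIV. \<integral>x. (A x $ i)\<^sup>2 \<partial>M)"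
proof -
  have "(\<integral>\<^sup>+x. ennreal ((norm (A x))\<^sup>2) \<partial>M) = (\<integral>\<^sup>+x. (\<Sum>i\<in>UNIV. ennreal ((A x $ i)\<^sup>2)) \<partial>M)"
    by (intro nn_integral_cong) (simp add: power2_norm_vec_eq_sum sum_ennreal)
  also have "\<dots> = (\<Sum>i\<in>UNIV. \<integral>\<^sup>+x. ennreal ((A x $ i)\<^sup>2) \<partial>M)"
    by (rule nn_integral_sum) simp
  also have "\<dots> = (\<Sum>i\<in>UNIV. ennreal (\<integral>x. (A x $ i)\<^sup>2 \<partial>M))"
    using assms by (intro sum.cong refl nn_integral_eq_integral) simp_all
  finally show ?thesis
    by (simp add: sum_ennreal)
qed

lemma norm_add_sq_plus_norm_diff_sq:
  "(norm (a + b))\<^sup>2 + (norm (a - b))\<^sup>2 = 2 * (norm a)\<^sup>2 + 2 * (norm b)\<^sup>2"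
  for a b :: "'a::real_inner"
  by (simp add: power2_norm_eq_inner inner_add_left inner_add_right inner_diff_left
      inner_diff_right inner_commute)

lemma nn_integral_norm_sq_lincomb_finite:
  fixes B C :: "'a \<Rightarrow> 'b::real_inner"
  assumes [measurable]: "B \<in> borel_measurable M" "C \<in> borel_measurable M"
    and "(\<integral>\<^sup>+x. ennreal ((norm (B x))\<^sup>2) \<partial>M) < \<infinity>" "(\<integral>\<^sup>+x. ennreal ((norm (C x))\<^sup>2) \<partial>M) < \<infinity>"
  shows "(\<integral>\<^sup>+x. ennreal ((norm (s *\<^sub>R B x + t *\<^sub>R C x))\<^sup>2) \<partial>M) < \<infinity>"
proof -
  have pointwise: "(norm (s *\<^sub>R B x + t *\<^sub>R C x))\<^sup>2
      \<le> 2 * s\<^sup>2 * (norm (B x))\<^sup>2 + 2 * t\<^sup>2 * (norm (C x))\<^sup>2" for x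
  proof -
    have "(norm (s *\<^sub>R B x + t *\<^sub>R C x))\<^sup>2 + (norm (s *\<^sub>R B x - t *\<^sub>R C x))\<^sup>2
        = 2 * s\<^sup>2 * (norm (B x))\<^sup>2 + 2 * t\<^sup>2 * (norm (C x))\<^sup>2"
      by (simp add: norm_add_sq_plus_norm_diff_sq power_mult_distrib mult.assoc)
    then show ?thesis
      using zero_le_power2[of "norm (s *\<^sub>R B x - t *\<^sub>R C x)"] by linarith
  qed
  have "(\<integral>\<^sup>+x. ennreal ((norm (s *\<^sub>R B x + t *\<^sub>R C x))\<^sup>2) \<partial>M)
      \<le> (\<integral>\<^sup>+x. ennreal (2 * s\<^sup>2) * ennreal ((norm (B x))\<^sup>2) + ennreal (2 * t\<^sup>2) * ennreal ((norm (C x))\<^sup>2) \<partial>M)"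
  proof (rule nn_integral_mono)
    fix x
    have "ennreal ((norm (s *\<^sub>R B x + t *\<^sub>R C x))\<^sup>2)
        \<le> ennreal (2 * s\<^sup>2 * (norm (B x))\<^sup>2 + 2 * t\<^sup>2 * (norm (C x))\<^sup>2)"
      using pointwise by (rule ennreal_leI)
    also have "\<dots> = ennreal (2 * s\<^sup>2) * ennreal ((norm (B x))\<^sup>2) + ennreal (2 * t\<^sup>2) * ennreal ((norm (C x))\<^sup>2)"
      by (subst ennreal_plus) (simp_all add: ennreal_mult)
    finally show "ennreal ((norm (s *\<^sub>R B x + t *\<^sub>R C x))\<^sup>2)
        \<le> ennreal (2 * s\<^sup>2) * ennreal ((norm (B x))\<^sup>2) + ennreal (2 * t\<^sup>2) * ennreal ((norm (C x))\<^sup>2)" .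
  qed
  also have "\<dots> = ennreal (2 * s\<^sup>2) * (\<integral>\<^sup>+x. ennreal ((norm (B x))\<^sup>2) \<partial>M)
                  + ennreal (2 * t\<^sup>2) * (\<integral>\<^sup>+x. ennreal ((norm (C x))\<^sup>2) \<partial>M)"
    by (simp add: nn_integral_add nn_integral_cmult)
  also have "\<dots> < \<infinity>"
    using assms(3,4) by (simp add: less_top[symmetric] ennreal_mult_eq_top_iff)
  finally show ?thesis .
qed

definition vec_cond_exp :: "'a measure \<Rightarrow> 'a measure \<Rightarrow> ('a \<Rightarrow> real^'n) \<Rightarrow> 'a \<Rightarrow> real^'n" where
  "vec_cond_exp M F X x = (\<chi> i. real_cond_exp M F (\<lambda>x. X x $ i) x)"

context sigma_finite_subalgebra
begin

lemma borel_measurable_vec_cond_exp[measurable]: "vec_cond_exp M F X \<in> borel_measurable F"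
  unfolding vec_cond_exp_def by measurable

lemma vec_cond_exp_sq_finite:
  assumes "finite_measure M" and [measurable]: "X \<in> borel_measurable M"
    and "(\<integral>\<^sup>+x. ennreal ((norm (X x))\<^sup>2) \<partial>M) < \<infinity>"
  shows "(\<integral>\<^sup>+x. ennreal ((norm (vec_cond_exp M F X x))\<^sup>2) \<partial>M) < \<infinity>"
proof -
  have "vec_cond_exp M F X \<in> borel_measurable M"
    by (rule measurable_from_subalg[OF subalg]) simp
  moreover have "integrable M (\<lambda>x. (vec_cond_exp M F X x $ i)\<^sup>2)" for i
    using integrable_square_real_cond_exp[OF assms(1) _ integrable_component_square[OF assms(2,3)]]
    by (simp add: vec_cond_exp_def)
  ultimately show ?thesis
    by (simp add: nn_integral_norm_sq_eq_sum)
qed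

lemma nn_integral_sq_dist_vec_cond_exp_le:
  assumes "finite_measure M" and [measurable]: "X \<in> borel_measurable M"
    and X2: "(\<integral>\<^sup>+x. ennreal ((norm (X x))\<^sup>2) \<partial>M) < \<infinity>"
    and [measurable]: "Z \<in> borel_measurable F" and Z2: "(\<integral>\<^sup>+x. ennreal ((norm (Z x))\<^sup>2) \<partial>M) < \<infinity>"
  shows "(\<integral>\<^sup>+x. ennreal ((norm (X x - vec_cond_exp M F X x))\<^sup>2) \<partial>M)
       \<le> (\<integral>\<^sup>+x. ennreal ((norm (X x - Z x))\<^sup>2) \<partial>M)"
proof -
  have [measurable]: "vec_cond_exp M F X \<in> borel_measurable M" "Z \<in> borel_measurable M"
    by (rule measurable_from_subalg[OF subalg], simp)+
  have X2i: "integrable M (\<lambda>x. (X x $ i)\<^sup>2)" for i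
    by (rule integrable_component_square[OF _ X2]) simp
  have Z2i: "integrable M (\<lambda>x. (Z x $ i)\<^sup>2)" for i
    by (rule integrable_component_square[OF _ Z2]) simp
  have "integrable M (\<lambda>x. (X x $ i - real_cond_exp M F (\<lambda>x. X x $ i) x)\<^sup>2)" for i
    using integrable_square_lincomb[OF _ _ X2i integrable_square_real_cond_exp[OF assms(1) _ X2i],
        where a=1 and b="-1"] measurable_from_subalg[OF subalg]
    by simp
  moreover have "integrable M (\<lambda>x. (X x $ i - Z x $ i)\<^sup>2)" for i
    using integrable_square_lincomb[OF _ _ X2i Z2i, where a=1 and b="-1"] by simp
  moreover have "(\<integral>x. (X x $ i - real_cond_exp M F (\<lambda>x. X x $ i) x)\<^sup>2 \<partial>M)
      \<le> (\<integral>x. (X x $ i - Z x $ i)\<^sup>2 \<partial>M)" for i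
    using integral_sq_dist_real_cond_exp_le[OF assms(1) _ X2i _ Z2i] by simp
  ultimately show ?thesis
    by (simp add: nn_integral_norm_sq_eq_sum vec_cond_exp_def) (auto intro!: ennreal_leI sum_mono)
qed

end

lemma measurable_vimage_algebra_factor:
  fixes h :: "'a \<Rightarrow> 'c::t1_space"
  assumes "h \<in> borel_measurable (vimage_algebra X f M)" and "f \<in> X \<rightarrow> space M"
    and "x \<in> X" "y \<in> X" "f x = f y"
  shows "h x = h y"
proof -
  have "h -` {h x} \<inter> X \<in> sets (vimage_algebra X f M)"
    using measurable_sets[OF assms(1), of "{h x}"] by simp
  then obtain A where A: "h -` {h x} \<inter> X = f -` A \<inter> X"
    using sets_vimage_algebra2[OF assms(2)] by auto
  have "x \<in> f -` A \<inter> X"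
    using A assms(3) by blast
  then have "y \<in> h -` {h x} \<inter> X"
    using A assms(4,5) by auto
  then show ?thesis
    by simp
qed

lemma norm_dist_midpoint_sq_le:
  fixes x :: "real^'n"
  assumes "\<And>i. a \<le> x $ i \<and> x $ i \<le> b"
  shows "(norm (x - (\<chi> i. (a + b) / 2)))\<^sup>2 \<le> real CARD('n) * ((b - a) / 2)\<^sup>2"
proof -
  have "(x $ i - (a + b) / 2)\<^sup>2 \<le> ((b - a) / 2)\<^sup>2" for i
  proof -
    have "(x $ i - (a + b) / 2)\<^sup>2 - ((b - a) / 2)\<^sup>2 = (x $ i - a) * (x $ i - b)"
      by (simp add: power2_eq_square field_simps)
    moreover have "(x $ i - a) * (x $ i - b) \<le> 0"
      using assms[of i] by (intro mult_nonneg_nonpos) auto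
    ultimately show ?thesis
      by simp
  qed
  then show ?thesis
    unfolding power2_norm_vec_eq_sum by (simp add: sum_bounded_above)
qed

lemma (in prob_space) nn_integral_affine_ennreal:
  assumes [measurable]: "g \<in> borel_measurable M" and "0 \<le> a" "0 \<le> e" "\<And>x. 0 \<le> g x"
  shows "(\<integral>\<^sup>+x. ennreal (a * g x + e) \<partial>M) = ennreal a * (\<integral>\<^sup>+x. ennreal (g x) \<partial>M) + ennreal e"
proof -
  have "(\<integral>\<^sup>+x. ennreal (a * g x + e) \<partial>M) = (\<integral>\<^sup>+x. ennreal a * ennreal (g x) + ennreal e \<partial>M)"
    using assms by (intro nn_integral_cong) (subst ennreal_plus, simp_all add: ennreal_mult)
  then show ?thesis
    by (simp add: nn_integral_add nn_integral_cmult emeasure_space_1)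
qed

section \<open>The standard Gaussian on real^'d\<close>

abbreviation std_gauss :: "(real^'d) measure" where
  "std_gauss \<equiv> gauss 0 1"

definition std_gauss_pdf :: "real^'d \<Rightarrow> real" where
  "std_gauss_pdf x = (2 * pi) powr (- real CARD('d) / 2) * exp (- (norm x)\<^sup>2 / 2)"

lemma std_gauss_eq_density: "std_gauss = density lborel (\<lambda>x. ennreal (std_gauss_pdf x))"
  unfolding gauss_def std_gauss_pdf_def by simp

lemma std_gauss_pdf_nonneg: "0 \<le> std_gauss_pdf x"
  by (simp add: std_gauss_pdf_def)

lemma borel_measurable_std_gauss_pdf[measurable]: "std_gauss_pdf \<in> borel_measurable borel"
  unfolding std_gauss_pdf_def by measurable

lemma sets_std_gauss[measurable_cong, simp]: "sets std_gauss = sets borel"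
  by (simp add: std_gauss_eq_density)

lemma space_std_gauss[simp]: "space std_gauss = UNIV"
  by (simp add: std_gauss_eq_density)

lemma power2_norm_eq_sum_Basis: "(norm x)\<^sup>2 = (\<Sum>b\<in>Basis. (x \<bullet> b)\<^sup>2)"
  for x :: "'a::euclidean_space"
  by (subst power2_norm_eq_inner, subst euclidean_inner) (simp add: power2_eq_square)

lemma std_gauss_pdf_eq_prod:
  "std_gauss_pdf x = (\<Prod>b\<in>Basis. std_normal_density (x \<bullet> b))" for x :: "real^'d"
proof -
  have "(\<Prod>b\<in>Basis. std_normal_density (x \<bullet> b))
      = (\<Prod>b\<in>Basis. (2*pi) powr (-1/2) * exp (- (x \<bullet> b)\<^sup>2 / 2))"
    by (intro prod.cong refl) (simp add: std_normal_density_def powr_minus_divide powr_half_sqrt)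
  also have "\<dots> = ((2*pi) powr (-1/2)) ^ DIM(real^'d) * exp (\<Sum>b\<in>Basis. - (x \<bullet> b)\<^sup>2 / 2)"
    by (simp add: prod.distrib exp_sum)
  also have "\<dots> = std_gauss_pdf x"
    by (simp add: std_gauss_pdf_def powr_power power2_norm_eq_sum_Basis sum_divide_distrib sum_negf)
  finally show ?thesis ..
qed

lemma nn_integral_std_normal_density: "(\<integral>\<^sup>+x. ennreal (std_normal_density x) \<partial>lborel) = 1"
proof -
  interpret prob_space "density lborel (std_normal_density)"
    by (rule prob_space_normal_density) simp
  show ?thesis
    using emeasure_space_1 by (simp add: emeasure_density)
qed

lemma nn_integral_std_normal_second_moment:
  "(\<integral>\<^sup>+x. ennreal (std_normal_density x * x\<^sup>2) \<partial>lborel) = 1"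
proof -
  have "has_bochner_integral lborel (\<lambda>x. std_normal_density x * x\<^sup>2) 1"
    using std_normal_moment_even[of 1] by (simp add: numeral_eq_Suc)
  then show ?thesis
    by (subst nn_integral_eq_integral) (auto simp: has_bochner_integral_iff normal_density_nonneg)
qed

lemma prob_space_std_gauss: "prob_space (std_gauss :: (real^'d) measure)"
proof
  have "emeasure (std_gauss :: (real^'d) measure) (space std_gauss)
      = (\<integral>\<^sup>+x. ennreal (std_gauss_pdf (x :: real^'d)) \<partial>lborel)"
    by (simp add: std_gauss_eq_density emeasure_density)
  also have "\<dots> = (\<integral>\<^sup>+x. (\<Prod>b\<in>Basis. ennreal (std_normal_density (x \<bullet> b)))
                       \<partial>(lborel :: (real^'d) measure))"
    by (simp add: std_gauss_pdf_eq_prod prod_ennreal normal_density_nonneg)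
  also have "\<dots> = (\<Prod>b\<in>(Basis :: (real^'d) set). (\<integral>\<^sup>+x. ennreal (std_normal_density x) \<partial>lborel))"
    by (rule nn_integral_lborel_prod) auto
  finally show "emeasure (std_gauss :: (real^'d) measure) (space std_gauss) = 1"
    by (simp add: nn_integral_std_normal_density)
qed

lemma emeasure_std_gauss_UNIV[simp]: "emeasure (std_gauss :: (real^'d) measure) UNIV = 1"
  using prob_space.emeasure_space_1[OF prob_space_std_gauss] by simp

lemma nn_integral_std_gauss:
  "f \<in> borel_measurable borel \<Longrightarrow>
    (\<integral>\<^sup>+z. f z \<partial>std_gauss) = (\<integral>\<^sup>+z. ennreal (std_gauss_pdf z) * f z \<partial>lborel)"
  by (simp add: std_gauss_eq_density nn_integral_density)

lemma nn_integral_lborel_affine: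
  fixes g :: "'a::euclidean_space \<Rightarrow> ennreal"
  assumes "c \<noteq> 0" and [measurable]: "g \<in> borel_measurable borel"
  shows "(\<integral>\<^sup>+x. g x \<partial>lborel) = (\<integral>\<^sup>+x. ennreal (\<bar>c\<bar> ^ DIM('a)) * g (t + c *\<^sub>R x) \<partial>lborel)"
  by (subst lborel_affine[OF assms(1), of t])
     (simp add: nn_integral_density nn_integral_distr)

lemma nn_integral_std_gauss_uminus:
  assumes [measurable]: "f \<in> borel_measurable borel"
  shows "(\<integral>\<^sup>+z. f (- z) \<partial>std_gauss) = (\<integral>\<^sup>+z. f z \<partial>std_gauss)"
proof -
  have "(\<integral>\<^sup>+z. ennreal (std_gauss_pdf z) * f z \<partial>lborel)
      = (\<integral>\<^sup>+z. ennreal (std_gauss_pdf (- z)) * f (- z) \<partial>lborel)"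
    using nn_integral_lborel_affine[of "-1" "\<lambda>z. ennreal (std_gauss_pdf z) * f z" 0] by simp
  then show ?thesis
    by (simp add: nn_integral_std_gauss std_gauss_pdf_def)
qed

lemma nn_integral_std_gauss_norm_sq:
  "(\<integral>\<^sup>+z. ennreal ((norm z)\<^sup>2) \<partial>(std_gauss :: (real^'d) measure)) = real CARD('d)"
proof -
  let ?g = "\<lambda>b0 b t. ennreal (std_normal_density t * (if b = b0 then t\<^sup>2 else 1))"
  have "ennreal (std_gauss_pdf z) * ennreal ((norm z)\<^sup>2)
      = (\<Sum>b0\<in>Basis. \<Prod>b\<in>Basis. ?g b0 b (z \<bullet> b))" for z :: "real^'d"
  proof -
    have "(\<Sum>b0\<in>Basis. \<Prod>b\<in>Basis. ?g b0 b (z \<bullet> b))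
        = (\<Sum>b0\<in>Basis. ennreal (std_gauss_pdf z * (z \<bullet> b0)\<^sup>2))"
      by (intro sum.cong refl)
         (simp add: prod_ennreal normal_density_nonneg prod.distrib std_gauss_pdf_eq_prod)
    also have "\<dots> = ennreal (std_gauss_pdf z) * ennreal ((norm z)\<^sup>2)"
      by (simp add: sum_ennreal std_gauss_pdf_nonneg power2_norm_eq_sum_Basis[of z]
          sum_distrib_left ennreal_mult'[symmetric])
    finally show ?thesis ..
  qed
  then have "(\<integral>\<^sup>+z. ennreal ((norm z)\<^sup>2) \<partial>(std_gauss :: (real^'d) measure))
      = (\<Sum>b0\<in>Basis. \<integral>\<^sup>+z. (\<Prod>b\<in>Basis. ?g b0 b (z \<bullet> b)) \<partial>(lborel :: (real^'d) measure))"
    by (simp add: nn_integral_std_gauss nn_integral_sum)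
  also have "\<dots> = (\<Sum>b0\<in>(Basis :: (real^'d) set). \<Prod>b\<in>Basis. \<integral>\<^sup>+t. ?g b0 b t \<partial>lborel)"
    by (intro sum.cong refl nn_integral_lborel_prod) auto
  also have "\<dots> = (\<Sum>b0\<in>(Basis :: (real^'d) set). 1)"
  proof -
    have "(\<integral>\<^sup>+t. ?g b0 b t \<partial>lborel) = 1" for b0 b :: "real^'d"
      by (cases "b = b0")
         (simp_all add: nn_integral_std_normal_density nn_integral_std_normal_second_moment)
    then show ?thesis
      by simp
  qed
  finally show ?thesis
    by (simp add: ennreal_of_nat_eq_real_of_nat)
qed

lemma nn_integral_std_gauss_affine_norm_sq:
  "(\<integral>\<^sup>+z. ennreal ((norm (a + t *\<^sub>R z))\<^sup>2) \<partial>(std_gauss :: (real^'d) measure))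
     = ennreal ((norm a)\<^sup>2 + t\<^sup>2 * real CARD('d))"
proof -
  interpret prob_space "std_gauss :: (real^'d) measure"
    by (rule prob_space_std_gauss)
  define I where "I = (\<integral>\<^sup>+z. ennreal ((norm (a + t *\<^sub>R z))\<^sup>2) \<partial>(std_gauss :: (real^'d) measure))"
  \<comment> \<open>averaging over z and -z cancels the cross term (parallelogram law)\<close>
  have "I + I = (\<integral>\<^sup>+z. ennreal ((norm (a + t *\<^sub>R z))\<^sup>2) + ennreal ((norm (a - t *\<^sub>R z))\<^sup>2)
                     \<partial>(std_gauss :: (real^'d) measure))"
    using nn_integral_std_gauss_uminus[of "\<lambda>z. ennreal ((norm (a + t *\<^sub>R z))\<^sup>2)"]
    by (simp add: I_def nn_integral_add)
  also have "\<dots> = (\<integral>\<^sup>+z. ennreal (2 * (norm a)\<^sup>2) + ennreal (2 * t\<^sup>2) * ennreal ((norm z)\<^sup>2)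
                       \<partial>(std_gauss :: (real^'d) measure))"
    by (intro nn_integral_cong)
       (simp add: norm_add_sq_plus_norm_diff_sq power_mult_distrib ennreal_mult'[symmetric]
        flip: ennreal_plus)
  also have "\<dots> = ennreal (2 * (norm a)\<^sup>2) + ennreal (2 * t\<^sup>2) * real CARD('d)"
    by (subst nn_integral_add)
       (auto simp: nn_integral_cmult nn_integral_std_gauss_norm_sq emeasure_space_1[simplified])
  also have "\<dots> = ennreal (2 * ((norm a)\<^sup>2 + t\<^sup>2 * real CARD('d)))"
    by (simp add: ennreal_mult'[symmetric] algebra_simps flip: ennreal_plus)
  finally show ?thesis
    unfolding I_def[symmetric]
    by (cases I rule: ennreal_cases) (auto simp flip: ennreal_plus)
qed

lemma gauss_eq_distr_std_gauss:
  fixes m :: "real^'d"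
  assumes "0 \<le> s2"
  shows "gauss m s2 = distr std_gauss borel (\<lambda>z. m + sqrt s2 *\<^sub>R z)"
proof (rule measure_eqI)
  show "sets (gauss m s2) = sets (distr std_gauss borel (\<lambda>z. m + sqrt s2 *\<^sub>R z))"
    by (simp add: gauss_def)
next
  fix A assume "A \<in> sets (gauss m s2)"
  then have A[measurable]: "A \<in> sets borel"
    by (simp add: gauss_def split: if_splits)
  show "emeasure (gauss m s2) A = emeasure (distr std_gauss borel (\<lambda>z. m + sqrt s2 *\<^sub>R z)) A"
  proof (cases "s2 = 0")
    case True
    interpret prob_space "std_gauss :: (real^'d) measure"
      by (rule prob_space_std_gauss)
    show ?thesis
      using True emeasure_space_1 by (simp add: gauss_def emeasure_distr split: split_indicator)
  next
    case False
    define c where "c = sqrt s2"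
    have c: "0 < c" and s2: "0 < s2"
      using assms False by (simp_all add: c_def)
    define pdf where "pdf = (\<lambda>x::real^'d. (2 * pi * s2) powr (- real CARD('d) / 2)
                                       * exp (- (norm (x - m))\<^sup>2 / (2 * s2)))"
    have pdf_scale: "c ^ CARD('d) * pdf (m + c *\<^sub>R x) = std_gauss_pdf x" for x
    proof -
      have "c ^ CARD('d) = s2 powr (real CARD('d) / 2)"
        using s2 by (simp add: c_def powr_half_sqrt[symmetric] powr_power)
      moreover have "(norm (c *\<^sub>R x))\<^sup>2 / (2 * s2) = (norm x)\<^sup>2 / 2"
        using c s2 by (simp add: c_def power_mult_distrib)
      ultimately show ?thesis
        using s2 by (simp add: pdf_def std_gauss_pdf_def powr_mult powr_minus field_simps
            powr_add[symmetric])
    qed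
    have "emeasure (gauss m s2) A = (\<integral>\<^sup>+x. ennreal (pdf x) * indicator A x \<partial>lborel)"
      using False by (simp add: gauss_def pdf_def emeasure_density)
    also have "\<dots> = (\<integral>\<^sup>+x. ennreal (\<bar>c\<bar> ^ DIM(real^'d))
                        * (ennreal (pdf (m + c *\<^sub>R x)) * indicator A (m + c *\<^sub>R x)) \<partial>lborel)"
      using c by (intro nn_integral_lborel_affine) (auto simp: pdf_def)
    also have "\<dots> = (\<integral>\<^sup>+x. ennreal (std_gauss_pdf x) * indicator A (m + c *\<^sub>R x) \<partial>lborel)"
      using c by (intro nn_integral_cong)
                 (simp add: pdf_scale[symmetric] mult.assoc ennreal_mult')
    also have "\<dots> = emeasure (distr std_gauss borel (\<lambda>z. m + sqrt s2 *\<^sub>R z)) A"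
      by (simp add: emeasure_distr std_gauss_eq_density emeasure_density c_def
          indicator_vimage[symmetric] vimage_def)
    finally show ?thesis .
  qed
qed

lemma distr_gauss_eq_distr_std_gauss:
  assumes "0 \<le> s2" and [measurable]: "g \<in> measurable borel T"
  shows "distr (gauss m s2) T g = distr std_gauss T (\<lambda>z. g (m + sqrt s2 *\<^sub>R z))"
  by (simp add: gauss_eq_distr_std_gauss[OF assms(1)] distr_distr comp_def)

lemma nn_integral_bind_distr_std_gauss:
  assumes [measurable]: "(\<lambda>(x, z). h x z) \<in> measurable (M \<Otimes>\<^sub>M borel) T"
    and [measurable]: "f \<in> borel_measurable T"
  shows "(\<integral>\<^sup>+w. f w \<partial>bind M (\<lambda>x. distr std_gauss T (h x)))
       = (\<integral>\<^sup>+x. \<integral>\<^sup>+z. f (h x z) \<partial>std_gauss \<partial>M)"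
proof -
  have "(\<lambda>x. distr std_gauss T (h x)) \<in> measurable M (subprob_algebra T)"
  proof (rule measurable_distr2)
    have "std_gauss \<in> space (subprob_algebra std_gauss)"
      using prob_space_std_gauss
      by (auto intro: prob_space_imp_subprob_space simp: space_subprob_algebra)
    then show "(\<lambda>x. std_gauss) \<in> measurable M (subprob_algebra std_gauss)"
      by (rule measurable_const)
  qed (simp add: measurable_cong_sets[OF sets_pair_measure_cong[OF refl sets_std_gauss] refl])
  moreover have "h x \<in> measurable borel T" if "x \<in> space M" for x
    using measurable_Pair2[OF assms(1) that] by simp
  ultimately show ?thesis
    by (simp add: nn_integral_bind[where B=T] nn_integral_distr cong: nn_integral_cong)
qed

section \<open>The forward process as iterated integrals\<close>

lemma measurable_fun_upd_PiM_UNIV[measurable (raw)]: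
  assumes "f \<in> measurable N (PiM UNIV M)" and "g \<in> measurable N (M j)"
  shows "(\<lambda>w. (f w)(j := g w)) \<in> measurable N (PiM UNIV M)"
  by (rule measurable_fun_upd[OF _ assms]) auto

lemma measurable_if_eq_PiM_UNIV[measurable (raw)]:
  assumes "f \<in> measurable N M" and "g \<in> measurable N M"
  shows "(\<lambda>w k. if k = j then g w else f w) \<in> measurable N (PiM UNIV (\<lambda>_. M))"
proof (rule measurable_PiM_single')
  show "(\<lambda>w. if i = j then g w else f w) \<in> measurable N M" for i
    using assms by (cases "i = j") simp_all
qed (use assms[THEN measurable_space] in auto)

lemma measurable_mu_tilde[measurable (raw)]:
  assumes [measurable]: "f \<in> borel_measurable M" "g \<in> borel_measurable M"
  shows "(\<lambda>w. mu_tilde \<beta> lam m (f w) (g w)) \<in> borel_measurable M"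
  unfolding mu_tilde_def by measurable

lemma sets_fwd_partial[simp, measurable_cong]: "sets (fwd_partial q \<beta> lam N k) = sets traj_space"
proof (induction k)
  case 0
  show ?case
    unfolding fwd_partial.simps fwd_init_def by (rule sets_bind) auto
next
  case (Suc k)
  show ?case
    unfolding fwd_partial.simps fwd_step_def
    by (rule sets_bind) (auto simp: sets_eq_imp_space_eq[OF Suc.IH])
qed

lemma nn_integral_fwd_step:
  assumes "0 \<le> lam m" and M: "sets M = sets traj_space"
    and [measurable]: "f \<in> borel_measurable traj_space"
  shows "(\<integral>\<^sup>+w. f w \<partial>fwd_step \<beta> lam m M) =
    (\<integral>\<^sup>+x. \<integral>\<^sup>+z. f (x(m - 1 := mu_tilde \<beta> lam m (x m) (x 0) + lam m *\<^sub>R z)) \<partial>std_gauss \<partial>M)"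
proof -
  have upd: "(\<lambda>y. x(j := y)) \<in> measurable borel traj_space" for x :: "nat \<Rightarrow> real^'d" and j
    by (intro measurable_fun_upd_PiM_UNIV) (auto simp: space_PiM)
  have "fwd_step \<beta> lam m M = bind M (\<lambda>x. distr std_gauss traj_space
          (\<lambda>z. x(m - 1 := mu_tilde \<beta> lam m (x m) (x 0) + lam m *\<^sub>R z)))"
    unfolding fwd_step_def using assms(1)
    by (intro bind_cong refl) (simp add: distr_gauss_eq_distr_std_gauss[OF _ upd])
  then show ?thesis
    by (simp add: nn_integral_bind_distr_std_gauss
        measurable_cong_sets[OF sets_pair_measure_cong[OF M refl] refl])
qed

lemma nn_integral_fwd_init:
  assumes "0 \<le> beta_bar \<beta> N" and [measurable]: "f \<in> borel_measurable traj_space"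
  shows "(\<integral>\<^sup>+w. f w \<partial>fwd_init q \<beta> N) =
    (\<integral>\<^sup>+x0. \<integral>\<^sup>+z. f (\<lambda>k. if k = N then sqrt (alpha_bar \<beta> N) *\<^sub>R x0 + sqrt (beta_bar \<beta> N) *\<^sub>R z
                          else x0) \<partial>std_gauss \<partial>density lborel (\<lambda>x. ennreal (q x)))"
proof -
  have init: "(\<lambda>xN k. if k = N then xN else x0) \<in> measurable borel traj_space" for x0 :: "real^'d"
    by measurable
  have "fwd_init q \<beta> N = bind (density lborel (\<lambda>x. ennreal (q x))) (\<lambda>x0. distr std_gauss traj_space
          (\<lambda>z k. if k = N then sqrt (alpha_bar \<beta> N) *\<^sub>R x0 + sqrt (beta_bar \<beta> N) *\<^sub>R z else x0))"
    unfolding fwd_init_def using assms(1)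
    by (intro bind_cong refl) (simp add: distr_gauss_eq_distr_std_gauss[OF _ init])
  then show ?thesis
    by (simp add: nn_integral_bind_distr_std_gauss
        measurable_cong_sets[OF sets_pair_measure_cong[OF sets_density refl] refl])
qed

lemma alpha_bar_0[simp]: "alpha_bar \<beta> 0 = 1"
  by (simp add: alpha_bar_def)

lemma beta_bar_0[simp]: "beta_bar \<beta> 0 = 0"
  by (simp add: beta_bar_def)

lemma alpha_bar_eq_mult: "1 \<le> k \<Longrightarrow> alpha_bar \<beta> k = alpha_bar \<beta> (k - 1) * alpha_s \<beta> k"
  by (cases k) (simp_all add: alpha_bar_def prod.nat_ivl_Suc')

locale noise_schedule =
  fixes \<beta> :: "nat \<Rightarrow> real" and N :: nat
  assumes beta_range: "\<And>k. k \<in> {1..N} \<Longrightarrow> 0 < \<beta> k \<and> \<beta> k < 1"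
begin

lemma alpha_s_bounds: "k \<in> {1..N} \<Longrightarrow> 0 < alpha_s \<beta> k \<and> alpha_s \<beta> k < 1"
  using beta_range[of k] by (simp add: alpha_s_def)

lemma alpha_bar_bounds: "k \<le> N \<Longrightarrow> 0 < alpha_bar \<beta> k \<and> alpha_bar \<beta> k \<le> 1"
proof (induction k)
  case (Suc k)
  then show ?case
    using alpha_s_bounds[of "Suc k"] alpha_bar_eq_mult[of "Suc k" \<beta>] by (simp add: mult_le_one)
qed simp

lemma beta_bar_pos:
  assumes "k \<in> {1..N}"
  shows "0 < beta_bar \<beta> k"
proof -
  have "0 < alpha_bar \<beta> (k - 1)" "alpha_bar \<beta> (k - 1) \<le> 1"
    using alpha_bar_bounds[of "k - 1"] assms by auto
  then have "alpha_bar \<beta> (k - 1) * alpha_s \<beta> k \<le> alpha_s \<beta> k"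
    using alpha_s_bounds[OF assms] by (intro mult_left_le_one_le) auto
  moreover have "alpha_bar \<beta> k = alpha_bar \<beta> (k - 1) * alpha_s \<beta> k"
    using assms by (intro alpha_bar_eq_mult) simp
  ultimately show ?thesis
    using alpha_s_bounds[OF assms] unfolding beta_bar_def by linarith
qed

lemma beta_bar_nonneg: "k \<le> N \<Longrightarrow> 0 \<le> beta_bar \<beta> k"
  using alpha_bar_bounds[of k] by (simp add: beta_bar_def)

end

section \<open>Second moments along the forward process\<close>

locale ddim_forward = noise_schedule \<beta> N
  for \<beta> :: "nat \<Rightarrow> real" and N :: nat +
  fixes q :: "real^'d \<Rightarrow> real" and lam :: "nat \<Rightarrow> real"
  assumes N_pos: "N \<ge> 1"
    and lambda_nonneg: "\<And>k. k \<in> {1..N} \<Longrightarrow> 0 \<le> lam k"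
    and lambda_bound: "\<And>k. k \<in> {1..N} \<Longrightarrow> (lam k)\<^sup>2 \<le> beta_bar \<beta> (k - 1)"
    and q_meas[measurable]: "q \<in> borel_measurable lborel"
    and q_prob: "(\<integral>\<^sup>+ x. ennreal (q x) \<partial>lborel) = 1"
    and q_second_moment: "integrable (density lborel (\<lambda>x. ennreal (q x))) (\<lambda>x. (norm x)\<^sup>2)"
begin

abbreviation q_dist :: "(real^'d) measure" where
  "q_dist \<equiv> density lborel (\<lambda>x. ennreal (q x))"

text \<open>Stage k has sampled x_0, x_N and x_(N-1), ..., x_(N-k); stage (N - 1) is the whole
  forward process.\<close>

abbreviation stage :: "nat \<Rightarrow> (nat \<Rightarrow> real^'d) measure" where
  "stage k \<equiv> fwd_partial q \<beta> lam N k"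

lemma prob_space_q_dist: "prob_space q_dist"
  by (rule prob_spaceI) (simp add: emeasure_density q_prob)

lemma lambda_1[simp]: "lam (Suc 0) = 0"
  using lambda_bound[of 1] N_pos by simp

lemma space_stage[simp]: "space (stage k) = UNIV"
  using sets_eq_imp_space_eq[OF sets_fwd_partial] by (simp add: space_PiM)

lemma measurable_stage[simp]: "measurable (stage k) M = measurable traj_space M"
  by (rule measurable_cong_sets) simp_all

lemma nn_integral_stage_Suc:
  assumes "k < N" and [measurable]: "f \<in> borel_measurable traj_space"
  shows "(\<integral>\<^sup>+w. f w \<partial>stage (Suc k)) =
    (\<integral>\<^sup>+x. \<integral>\<^sup>+z. f (x(N - k - 1 := mu_tilde \<beta> lam (N - k) (x (N - k)) (x 0) + lam (N - k) *\<^sub>R z))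
       \<partial>std_gauss \<partial>stage k)"
  using assms lambda_nonneg[of "N - k"] by (simp add: nn_integral_fwd_step)

lemma nn_integral_stage_eq_of_unaffected:
  assumes "k0 \<le> k" "k < N" and [measurable]: "f \<in> borel_measurable traj_space"
    and unaffected: "\<And>j x y. 1 \<le> j \<Longrightarrow> j < N - k0 \<Longrightarrow> f (x(j := y)) = f x"
  shows "(\<integral>\<^sup>+w. f w \<partial>stage k) = (\<integral>\<^sup>+w. f w \<partial>stage k0)"
  using assms(1,2)
proof (induction k)
  case (Suc k)
  show ?case
  proof (cases "k0 = Suc k")
    case False
    with Suc.prems have "k0 \<le> k" "k < N"
      by auto
    then have "(\<integral>\<^sup>+w. f w \<partial>stage (Suc k))
        = (\<integral>\<^sup>+x. \<integral>\<^sup>+z. f x \<partial>(std_gauss :: (real^'d) measure) \<partial>stage k)"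
      using Suc.prems by (subst nn_integral_stage_Suc[OF \<open>k < N\<close> assms(3)]) (simp add: unaffected)
    also have "\<dots> = (\<integral>\<^sup>+x. f x \<partial>stage k)"
      by simp
    finally show ?thesis
      using Suc \<open>k0 \<le> k\<close> \<open>k < N\<close> by simp
  qed simp
qed simp

lemma nn_integral_stage_x0:
  assumes "k < N" and [measurable]: "g \<in> borel_measurable borel"
  shows "(\<integral>\<^sup>+w. g (w 0) \<partial>stage k) = (\<integral>\<^sup>+x. g x \<partial>q_dist)"
proof -
  have "(\<integral>\<^sup>+w. g (w 0) \<partial>stage k) = (\<integral>\<^sup>+w. g (w 0) \<partial>stage 0)"
    using assms by (intro nn_integral_stage_eq_of_unaffected) simp_all
  also have "\<dots> = (\<integral>\<^sup>+x. g x \<partial>q_dist)"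
    using N_pos by (simp add: nn_integral_fwd_init beta_bar_nonneg)
  finally show ?thesis .
qed

lemma prob_space_stage: "k < N \<Longrightarrow> prob_space (stage k)"
  using nn_integral_stage_x0[of k "\<lambda>_. 1"] prob_space.emeasure_space_1[OF prob_space_q_dist]
  by (intro prob_spaceI) simp

definition mu_coeff :: "nat \<Rightarrow> real" where
  "mu_coeff n = sqrt (beta_bar \<beta> (n - 1) - (lam n)\<^sup>2) / sqrt (beta_bar \<beta> n)"

lemma mu_tilde_eq:
  "mu_tilde \<beta> lam n xn x0 = sqrt (alpha_bar \<beta> (n - 1)) *\<^sub>R x0 + mu_coeff n *\<^sub>R (xn - sqrt (alpha_bar \<beta> n) *\<^sub>R x0)"
  by (simp add: mu_tilde_def mu_coeff_def)

lemma mu_coeff_sq: "n \<in> {1..N} \<Longrightarrow> (mu_coeff n)\<^sup>2 * beta_bar \<beta> n = beta_bar \<beta> (n - 1) - (lam n)\<^sup>2"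
  using beta_bar_pos[of n] lambda_bound[of n] by (simp add: mu_coeff_def power_divide)

lemma nn_integral_stage_noise_norm_sq_Suc:
  assumes "1 \<le> m" "m < N"
  shows "(\<integral>\<^sup>+w. ennreal ((norm (w m - sqrt (alpha_bar \<beta> m) *\<^sub>R w 0))\<^sup>2) \<partial>stage (N - m))
       = ennreal ((mu_coeff (Suc m))\<^sup>2)
           * (\<integral>\<^sup>+w. ennreal ((norm (w (Suc m) - sqrt (alpha_bar \<beta> (Suc m)) *\<^sub>R w 0))\<^sup>2)
                \<partial>stage (N - Suc m))
         + ennreal ((lam (Suc m))\<^sup>2 * real CARD('d))"
proof -
  have m: "N - Suc m < N" "N - m = Suc (N - Suc m)"
    using assms by auto
  let ?u = "\<lambda>x::nat \<Rightarrow> real^'d. x (Suc m) - sqrt (alpha_bar \<beta> (Suc m)) *\<^sub>R x 0"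
  have "(\<integral>\<^sup>+w. ennreal ((norm (w m - sqrt (alpha_bar \<beta> m) *\<^sub>R w 0))\<^sup>2) \<partial>stage (N - m))
      = (\<integral>\<^sup>+x. \<integral>\<^sup>+z. ennreal ((norm (mu_coeff (Suc m) *\<^sub>R ?u x + lam (Suc m) *\<^sub>R z))\<^sup>2)
           \<partial>std_gauss \<partial>stage (N - Suc m))"
    using assms unfolding m(2)
    by (subst nn_integral_stage_Suc[OF m(1)]) (simp_all add: Suc_diff_Suc mu_tilde_eq algebra_simps)
  also have "\<dots> = (\<integral>\<^sup>+x. ennreal ((mu_coeff (Suc m))\<^sup>2 * (norm (?u x))\<^sup>2
                                 + (lam (Suc m))\<^sup>2 * real CARD('d)) \<partial>stage (N - Suc m))"
    by (simp add: nn_integral_std_gauss_affine_norm_sq power_mult_distrib)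
  also have "\<dots> = ennreal ((mu_coeff (Suc m))\<^sup>2) * (\<integral>\<^sup>+x. ennreal ((norm (?u x))\<^sup>2) \<partial>stage (N - Suc m))
                  + ennreal ((lam (Suc m))\<^sup>2 * real CARD('d))"
    using prob_space_stage[OF m(1)] by (subst prob_space.nn_integral_affine_ennreal) simp_all
  finally show ?thesis .
qed

lemma nn_integral_stage_noise_norm_sq:
  assumes "n \<in> {1..N}"
  shows "(\<integral>\<^sup>+w. ennreal ((norm (w n - sqrt (alpha_bar \<beta> n) *\<^sub>R w 0))\<^sup>2) \<partial>stage (N - n))
       = ennreal (real CARD('d) * beta_bar \<beta> n)"
proof -
  from assms have "1 \<le> n" "n \<le> N"
    by auto
  from \<open>n \<le> N\<close> show ?thesis
  proof (induction rule: inc_induct)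
    case base
    have "(\<integral>\<^sup>+w. ennreal ((norm (w N - sqrt (alpha_bar \<beta> N) *\<^sub>R w 0))\<^sup>2) \<partial>stage 0)
        = (\<integral>\<^sup>+x0. \<integral>\<^sup>+z. ennreal ((norm (0 + sqrt (beta_bar \<beta> N) *\<^sub>R z))\<^sup>2)
             \<partial>(std_gauss :: (real^'d) measure) \<partial>q_dist)"
      using N_pos by (simp add: nn_integral_fwd_init beta_bar_nonneg)
    also have "\<dots> = (\<integral>\<^sup>+x0. ennreal (real CARD('d) * beta_bar \<beta> N) \<partial>q_dist)"
      by (simp only: nn_integral_std_gauss_affine_norm_sq) (simp add: beta_bar_nonneg mult.commute)
    finally show ?case
      using prob_space.emeasure_space_1[OF prob_space_q_dist] by simp
  next
    case (step m)
    have "(mu_coeff (Suc m))\<^sup>2 * (real CARD('d) * beta_bar \<beta> (Suc m)) + (lam (Suc m))\<^sup>2 * real CARD('d)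
        = real CARD('d) * ((mu_coeff (Suc m))\<^sup>2 * beta_bar \<beta> (Suc m) + (lam (Suc m))\<^sup>2)"
      by (simp add: algebra_simps)
    also have "\<dots> = real CARD('d) * beta_bar \<beta> m"
      using mu_coeff_sq[of "Suc m"] step.hyps by simp
    finally show ?case
      using step \<open>1 \<le> n\<close> beta_bar_nonneg[of "Suc m"]
      by (simp add: nn_integral_stage_noise_norm_sq_Suc ennreal_mult'[symmetric] flip: ennreal_plus)
  qed
qed

lemma nn_integral_sq_dist_prev:
  assumes n: "n \<in> {1..N}" and [measurable]: "W \<in> borel_measurable traj_space"
    and depends_on_xn: "\<And>x y. x n = y n \<Longrightarrow> W x = W y"
  shows "(\<integral>\<^sup>+w. ennreal ((norm (w (n - 1) - W w))\<^sup>2) \<partial>stage (N - 1))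
       = (\<integral>\<^sup>+w. ennreal ((norm (mu_tilde \<beta> lam n (w n) (w 0) - W w))\<^sup>2) \<partial>stage (N - 1))
         + ennreal ((lam n)\<^sup>2 * real CARD('d))"
proof (cases "n = 1")
  case True
  \<comment> \<open>x_0 is never resampled, and mu_tilde for n = 1 returns x_0 because lam 1 = 0\<close>
  then show ?thesis
    by (simp add: mu_tilde_def)
next
  case False
  then have n2: "2 \<le> n" "n \<le> N" "N - n < N"
    using n by auto
  have W_upd: "W (x(j := y)) = W x" if "j \<noteq> n" for x j y
    using that by (intro depends_on_xn) simp
  have "(\<integral>\<^sup>+w. ennreal ((norm (w (n - 1) - W w))\<^sup>2) \<partial>stage (N - 1))
      = (\<integral>\<^sup>+w. ennreal ((norm (w (n - 1) - W w))\<^sup>2) \<partial>stage (Suc (N - n)))"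
    using n2 by (intro nn_integral_stage_eq_of_unaffected) (auto simp: W_upd)
  also have "\<dots> = (\<integral>\<^sup>+x. \<integral>\<^sup>+z. ennreal ((norm ((mu_tilde \<beta> lam n (x n) (x 0) - W x) + lam n *\<^sub>R z))\<^sup>2)
                       \<partial>std_gauss \<partial>stage (N - n))"
    using n2 by (subst nn_integral_stage_Suc) (simp_all add: W_upd algebra_simps)
  also have "\<dots> = (\<integral>\<^sup>+x. ennreal ((norm (mu_tilde \<beta> lam n (x n) (x 0) - W x))\<^sup>2
                                 + (lam n)\<^sup>2 * real CARD('d)) \<partial>stage (N - n))"
    by (simp add: nn_integral_std_gauss_affine_norm_sq)
  also have "\<dots> = (\<integral>\<^sup>+x. ennreal ((norm (mu_tilde \<beta> lam n (x n) (x 0) - W x))\<^sup>2) \<partial>stage (N - n))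
                  + ennreal ((lam n)\<^sup>2 * real CARD('d))"
    using prob_space.nn_integral_affine_ennreal[OF prob_space_stage[OF n2(3)],
        of "\<lambda>x. (norm (mu_tilde \<beta> lam n (x n) (x 0) - W x))\<^sup>2" 1 "(lam n)\<^sup>2 * real CARD('d)"]
    by simp
  also have "(\<integral>\<^sup>+x. ennreal ((norm (mu_tilde \<beta> lam n (x n) (x 0) - W x))\<^sup>2) \<partial>stage (N - n))
      = (\<integral>\<^sup>+x. ennreal ((norm (mu_tilde \<beta> lam n (x n) (x 0) - W x))\<^sup>2) \<partial>stage (N - 1))"
    using n2 by (intro nn_integral_stage_eq_of_unaffected[symmetric]) (auto simp: W_upd)
  finally show ?thesis .
qed

end

section \<open>Bounds on the optimal reverse variance\<close>

lemma opt_var_nonneg: "0 \<le> opt_var q \<beta> lam N n"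
  unfolding opt_var_def Let_def
  by (intro divide_nonneg_nonneg sum_nonneg integral_nonneg_AE AE_I2) simp_all

locale ddim_step = ddim_forward \<beta> N q lam
  for \<beta> :: "nat \<Rightarrow> real" and N :: nat and q :: "real^'d \<Rightarrow> real" and lam :: "nat \<Rightarrow> real" +
  fixes n :: nat
  assumes n_range: "n \<in> {1..N}"
begin

abbreviation fwd :: "(nat \<Rightarrow> real^'d) measure" where
  "fwd \<equiv> stage (N - 1)"

abbreviation sigma_xn :: "(nat \<Rightarrow> real^'d) measure" where
  "sigma_xn \<equiv> vimage_algebra UNIV (\<lambda>\<omega>. \<omega> n) borel"

lemma prob_space_fwd: "prob_space fwd"
  using N_pos by (intro prob_space_stage) simp

lemma finite_measure_fwd: "finite_measure fwd"
  using prob_space_fwd by (rule prob_space.axioms(1))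

lemma measurable_sigma_xn_xn[measurable]: "(\<lambda>\<omega>. \<omega> n) \<in> measurable sigma_xn borel"
  by (rule measurable_vimage_algebra1) simp

lemma subalgebra_sigma_xn: "subalgebra fwd sigma_xn"
proof -
  have "sets sigma_xn \<subseteq> sets traj_space"
    by (rule sets_image_in_sets) (simp_all add: space_PiM)
  then show ?thesis
    unfolding subalgebra_def by simp
qed

lemma sigma_finite_subalgebra_sigma_xn: "sigma_finite_subalgebra fwd sigma_xn"
  using prob_space_fwd subalgebra_sigma_xn
  unfolding prob_space_def
  by (intro finite_measure_subalgebra_is_sigma_finite)
     (simp add: finite_measure_subalgebra_def finite_measure_subalgebra_axioms_def)

lemma measurable_sigma_xn_imp_traj: "h \<in> measurable sigma_xn M \<Longrightarrow> h \<in> measurable traj_space M"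
  using measurable_from_subalg[OF subalgebra_sigma_xn] by simp

lemma measurable_sigma_xn_depends_on_xn:
  fixes h :: "(nat \<Rightarrow> real^'d) \<Rightarrow> real^'d"
  shows "h \<in> borel_measurable sigma_xn \<Longrightarrow> x n = y n \<Longrightarrow> h x = h y"
  using measurable_vimage_algebra_factor[of h UNIV "\<lambda>\<omega>. \<omega> n" borel x y] by simp

lemma fwd_x0_sq_finite: "(\<integral>\<^sup>+\<omega>. ennreal ((norm (\<omega> 0))\<^sup>2) \<partial>fwd) < \<infinity>"
  using q_second_moment N_pos
  by (simp add: nn_integral_stage_x0[where g="\<lambda>x. ennreal ((norm x)\<^sup>2)"] integrable_iff_bounded)

lemma fwd_noise_sq:
  "(\<integral>\<^sup>+\<omega>. ennreal ((norm (\<omega> n - sqrt (alpha_bar \<beta> n) *\<^sub>R \<omega> 0))\<^sup>2) \<partial>fwd)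
     = ennreal (real CARD('d) * beta_bar \<beta> n)"
proof -
  have "(\<integral>\<^sup>+\<omega>. ennreal ((norm (\<omega> n - sqrt (alpha_bar \<beta> n) *\<^sub>R \<omega> 0))\<^sup>2) \<partial>fwd)
      = (\<integral>\<^sup>+\<omega>. ennreal ((norm (\<omega> n - sqrt (alpha_bar \<beta> n) *\<^sub>R \<omega> 0))\<^sup>2) \<partial>stage (N - n))"
    using n_range by (intro nn_integral_stage_eq_of_unaffected) auto
  then show ?thesis
    by (simp add: nn_integral_stage_noise_norm_sq[OF n_range])
qed

lemma fwd_xn_sq_finite: "(\<integral>\<^sup>+\<omega>. ennreal ((norm (\<omega> n))\<^sup>2) \<partial>fwd) < \<infinity>"
  using nn_integral_norm_sq_lincomb_finite[OF _ _ _ fwd_x0_sq_finite,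
      of "\<lambda>\<omega>. \<omega> n - sqrt (alpha_bar \<beta> n) *\<^sub>R \<omega> 0" 1 "sqrt (alpha_bar \<beta> n)"] fwd_noise_sq
  by simp

lemma fwd_prev_sq_finite: "(\<integral>\<^sup>+\<omega>. ennreal ((norm (\<omega> (n - 1)))\<^sup>2) \<partial>fwd) < \<infinity>"
proof -
  have "(\<integral>\<^sup>+\<omega>. ennreal ((norm (mu_tilde \<beta> lam n (\<omega> n) (\<omega> 0)))\<^sup>2) \<partial>fwd) < \<infinity>"
    using nn_integral_norm_sq_lincomb_finite[OF _ _ fwd_x0_sq_finite,
        of "\<lambda>\<omega>. \<omega> n - sqrt (alpha_bar \<beta> n) *\<^sub>R \<omega> 0" "sqrt (alpha_bar \<beta> (n - 1))" "mu_coeff n"]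
      fwd_noise_sq
    by (simp add: mu_tilde_eq)
  then show ?thesis
    using nn_integral_sq_dist_prev[OF n_range, of "\<lambda>_. 0"] by simp
qed

lemma opt_var_eq:
  "ennreal (real CARD('d) * opt_var q \<beta> lam N n)
     = (\<integral>\<^sup>+\<omega>. ennreal ((norm (\<omega> (n - 1) - vec_cond_exp fwd sigma_xn (\<lambda>\<omega>. \<omega> (n - 1)) \<omega>))\<^sup>2) \<partial>fwd)"
proof -
  let ?E = "vec_cond_exp fwd sigma_xn (\<lambda>\<omega>. \<omega> (n - 1))"
  have E: "?E \<in> borel_measurable traj_space"
    using sigma_finite_subalgebra.borel_measurable_vec_cond_exp[OF sigma_finite_subalgebra_sigma_xn]
    by (rule measurable_sigma_xn_imp_traj)
  have "(\<integral>\<^sup>+\<omega>. ennreal ((norm (?E \<omega>))\<^sup>2) \<partial>fwd) < \<infinity>"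
    using fwd_prev_sq_finite
    by (intro sigma_finite_subalgebra.vec_cond_exp_sq_finite[OF sigma_finite_subalgebra_sigma_xn
          finite_measure_fwd]) simp_all
  then have "(\<integral>\<^sup>+\<omega>. ennreal ((norm (1 *\<^sub>R \<omega> (n - 1) + (-1) *\<^sub>R ?E \<omega>))\<^sup>2) \<partial>fwd) < \<infinity>"
    using fwd_prev_sq_finite E by (intro nn_integral_norm_sq_lincomb_finite) simp_all
  then have "integrable fwd (\<lambda>\<omega>. ((\<omega> (n - 1) - ?E \<omega>) $ i)\<^sup>2)" for i
    using E by (intro integrable_component_square) simp_all
  then have "(\<integral>\<^sup>+\<omega>. ennreal ((norm (\<omega> (n - 1) - ?E \<omega>))\<^sup>2) \<partial>fwd)
      = ennreal (\<Sum>i\<in>UNIV. \<integral>\<omega>. ((\<omega> (n - 1) - ?E \<omega>) $ i)\<^sup>2 \<partial>fwd)"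
    using E by (intro nn_integral_norm_sq_eq_sum) simp_all
  also have "\<dots> = ennreal (real CARD('d) * opt_var q \<beta> lam N n)"
    by (simp add: opt_var_def fwd_process_def Let_def vec_cond_exp_def)
  finally show ?thesis ..
qed

lemma lambda_sq_le_opt_var: "(lam n)\<^sup>2 \<le> opt_var q \<beta> lam N n"
proof -
  let ?E = "vec_cond_exp fwd sigma_xn (\<lambda>\<omega>. \<omega> (n - 1))"
  have E: "?E \<in> borel_measurable sigma_xn"
    by (rule sigma_finite_subalgebra.borel_measurable_vec_cond_exp[OF sigma_finite_subalgebra_sigma_xn])
  have "ennreal (real CARD('d) * opt_var q \<beta> lam N n)
      = (\<integral>\<^sup>+\<omega>. ennreal ((norm (mu_tilde \<beta> lam n (\<omega> n) (\<omega> 0) - ?E \<omega>))\<^sup>2) \<partial>fwd)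
        + ennreal ((lam n)\<^sup>2 * real CARD('d))"
    unfolding opt_var_eq
    by (rule nn_integral_sq_dist_prev[OF n_range measurable_sigma_xn_imp_traj[OF E]])
       (rule measurable_sigma_xn_depends_on_xn[OF E])
  then have "ennreal ((lam n)\<^sup>2 * real CARD('d)) \<le> ennreal (real CARD('d) * opt_var q \<beta> lam N n)"
    by simp
  moreover have "0 \<le> real CARD('d) * opt_var q \<beta> lam N n"
    by (intro mult_nonneg_nonneg opt_var_nonneg) simp
  ultimately have "real CARD('d) * (lam n)\<^sup>2 \<le> real CARD('d) * opt_var q \<beta> lam N n"
    by (simp add: ennreal_le_iff mult.commute)
  then show ?thesis
    by (simp add: mult_le_cancel_left_pos)
qed

lemma opt_var_le_residual:
  assumes Z[measurable]: "Z \<in> borel_measurable sigma_xn"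
    and Z2: "(\<integral>\<^sup>+\<omega>. ennreal ((norm (Z \<omega>))\<^sup>2) \<partial>fwd) < \<infinity>"
    and [measurable]: "V \<in> borel_measurable traj_space"
    and residual: "\<And>\<omega>. mu_tilde \<beta> lam n (\<omega> n) (\<omega> 0) - Z \<omega> = k *\<^sub>R V \<omega>"
    and V2: "(\<integral>\<^sup>+\<omega>. ennreal ((norm (V \<omega>))\<^sup>2) \<partial>fwd) \<le> ennreal (real CARD('d) * B)"
    and "0 \<le> B"
  shows "opt_var q \<beta> lam N n \<le> (lam n)\<^sup>2 + k\<^sup>2 * B"
proof -
  have "ennreal (real CARD('d) * opt_var q \<beta> lam N n)
      \<le> (\<integral>\<^sup>+\<omega>. ennreal ((norm (\<omega> (n - 1) - Z \<omega>))\<^sup>2) \<partial>fwd)"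
    unfolding opt_var_eq
    by (rule sigma_finite_subalgebra.nn_integral_sq_dist_vec_cond_exp_le[OF
          sigma_finite_subalgebra_sigma_xn finite_measure_fwd _ fwd_prev_sq_finite Z Z2]) simp
  also have "\<dots> = (\<integral>\<^sup>+\<omega>. ennreal ((norm (k *\<^sub>R V \<omega>))\<^sup>2) \<partial>fwd) + ennreal ((lam n)\<^sup>2 * real CARD('d))"
    unfolding residual[symmetric]
    by (rule nn_integral_sq_dist_prev[OF n_range measurable_sigma_xn_imp_traj[OF Z]])
       (rule measurable_sigma_xn_depends_on_xn[OF Z])
  also have "(\<integral>\<^sup>+\<omega>. ennreal ((norm (k *\<^sub>R V \<omega>))\<^sup>2) \<partial>fwd)
      = ennreal (k\<^sup>2) * (\<integral>\<^sup>+\<omega>. ennreal ((norm (V \<omega>))\<^sup>2) \<partial>fwd)"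
    by (simp add: power_mult_distrib ennreal_mult nn_integral_cmult)
  also have "\<dots> \<le> ennreal (k\<^sup>2) * ennreal (real CARD('d) * B)"
    using V2 by (rule mult_left_mono) simp
  finally have "ennreal (real CARD('d) * opt_var q \<beta> lam N n)
      \<le> ennreal (real CARD('d) * ((lam n)\<^sup>2 + k\<^sup>2 * B))"
    using \<open>0 \<le> B\<close> by (simp add: ennreal_mult'[symmetric] algebra_simps flip: ennreal_plus)
  then show ?thesis
    using \<open>0 \<le> B\<close> by (simp add: ennreal_le_iff)
qed

lemma opt_var_le_noise_bound:
  "opt_var q \<beta> lam N n
     \<le> (lam n)\<^sup>2 + (sqrt (beta_bar \<beta> n / alpha_s \<beta> n) - sqrt (beta_bar \<beta> (n - 1) - (lam n)\<^sup>2))\<^sup>2"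
proof -
  define r where "r = 1 / sqrt (alpha_s \<beta> n)"
  define \<kappa> where "\<kappa> = mu_coeff n - r"
  have \<alpha>: "0 < alpha_s \<beta> n" and bb: "0 < beta_bar \<beta> n"
    using alpha_s_bounds[OF n_range] beta_bar_pos[OF n_range] by auto
  have r_sqrt: "sqrt (alpha_bar \<beta> (n - 1)) = r * sqrt (alpha_bar \<beta> n)"
    using \<alpha> n_range alpha_bar_eq_mult[of n \<beta>] by (simp add: r_def real_sqrt_mult)
  have residual: "mu_tilde \<beta> lam n (\<omega> n) (\<omega> 0) - r *\<^sub>R \<omega> n
      = \<kappa> *\<^sub>R (\<omega> n - sqrt (alpha_bar \<beta> n) *\<^sub>R \<omega> 0)" for \<omega> :: "nat \<Rightarrow> real^'d"
    unfolding mu_tilde_eq r_sqrt \<kappa>_def by (simp add: vec_eq_iff algebra_simps)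
  have Z: "(\<lambda>\<omega>. r *\<^sub>R \<omega> n) \<in> borel_measurable sigma_xn"
    by measurable
  have "(\<integral>\<^sup>+\<omega>. ennreal ((norm (r *\<^sub>R \<omega> n))\<^sup>2) \<partial>fwd) < \<infinity>"
    using nn_integral_norm_sq_lincomb_finite[OF _ _ fwd_xn_sq_finite fwd_xn_sq_finite, of r 0]
    by simp
  from opt_var_le_residual[OF Z this _ residual] have
    "opt_var q \<beta> lam N n \<le> (lam n)\<^sup>2 + \<kappa>\<^sup>2 * beta_bar \<beta> n"
    using fwd_noise_sq bb by simp
  also have "\<kappa>\<^sup>2 * beta_bar \<beta> n
      = (sqrt (beta_bar \<beta> n / alpha_s \<beta> n) - sqrt (beta_bar \<beta> (n - 1) - (lam n)\<^sup>2))\<^sup>2"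
  proof -
    have "\<kappa>\<^sup>2 * beta_bar \<beta> n = (\<kappa> * sqrt (beta_bar \<beta> n))\<^sup>2"
      using bb by (simp add: power_mult_distrib)
    also have "\<kappa> * sqrt (beta_bar \<beta> n)
        = sqrt (beta_bar \<beta> (n - 1) - (lam n)\<^sup>2) - sqrt (beta_bar \<beta> n / alpha_s \<beta> n)"
      using bb \<alpha> by (simp add: \<kappa>_def r_def mu_coeff_def real_sqrt_divide field_simps)
    finally show ?thesis
      by (simp add: power2_commute)
  qed
  finally show ?thesis .
qed

lemma nn_integral_fwd_x0_dist_midpoint:
  assumes support: "AE x in lborel. (\<exists>i. x $ i < a \<or> b < x $ i) \<longrightarrow> q x = 0"
  shows "(\<integral>\<^sup>+\<omega>. ennreal ((norm (\<omega> 0 - (\<chi> i. (a + b) / 2)))\<^sup>2) \<partial>fwd)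
       \<le> ennreal (real CARD('d) * ((b - a) / 2)\<^sup>2)"
proof -
  have "AE x in lborel. 0 < q x \<longrightarrow> ennreal ((norm (x - (\<chi> i. (a + b) / 2)))\<^sup>2)
                                      \<le> ennreal (real CARD('d) * ((b - a) / 2)\<^sup>2)"
    using support
  proof (rule AE_mp, intro AE_I2 impI)
    fix x :: "real^'d"
    assume "(\<exists>i. x $ i < a \<or> b < x $ i) \<longrightarrow> q x = 0" and "0 < q x"
    then have "a \<le> x $ i \<and> x $ i \<le> b" for i
      by (auto simp: not_less[symmetric])
    then show "ennreal ((norm (x - (\<chi> i. (a + b) / 2)))\<^sup>2) \<le> ennreal (real CARD('d) * ((b - a) / 2)\<^sup>2)"
      by (intro ennreal_leI norm_dist_midpoint_sq_le)
  qed
  then have "AE x in q_dist. ennreal ((norm (x - (\<chi> i. (a + b) / 2)))\<^sup>2)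
                          \<le> ennreal (real CARD('d) * ((b - a) / 2)\<^sup>2)"
    by (subst AE_density) simp_all
  then have "(\<integral>\<^sup>+x. ennreal ((norm (x - (\<chi> i. (a + b) / 2)))\<^sup>2) \<partial>q_dist)
      \<le> (\<integral>\<^sup>+x. ennreal (real CARD('d) * ((b - a) / 2)\<^sup>2) \<partial>q_dist)"
    by (rule nn_integral_mono_AE)
  then show ?thesis
    using N_pos prob_space.emeasure_space_1[OF prob_space_q_dist]
    by (simp add: nn_integral_stage_x0[where g="\<lambda>x. ennreal ((norm (x - (\<chi> i. (a + b) / 2)))\<^sup>2)"])
qed

lemma opt_var_le_support_bound:
  assumes support: "AE x in lborel. (\<exists>i. x $ i < a \<or> b < x $ i) \<longrightarrow> q x = 0"
  shows "opt_var q \<beta> lam N n \<le> (lam n)\<^sup>2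
           + (sqrt (alpha_bar \<beta> (n - 1))
              - sqrt (beta_bar \<beta> (n - 1) - (lam n)\<^sup>2) * sqrt (alpha_bar \<beta> n / beta_bar \<beta> n))\<^sup>2
             * ((b - a) / 2)\<^sup>2"
proof -
  let ?E0 = "vec_cond_exp fwd sigma_xn (\<lambda>\<omega>. \<omega> 0)"
  let ?mid = "(\<chi> i. (a + b) / 2) :: real^'d"
  define k where "k = sqrt (alpha_bar \<beta> (n - 1)) - mu_coeff n * sqrt (alpha_bar \<beta> n)"
  have E0[measurable]: "?E0 \<in> borel_measurable sigma_xn"
    by (rule sigma_finite_subalgebra.borel_measurable_vec_cond_exp[OF sigma_finite_subalgebra_sigma_xn])
  have E0_fin: "(\<integral>\<^sup>+\<omega>. ennreal ((norm (?E0 \<omega>))\<^sup>2) \<partial>fwd) < \<infinity>"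
    using fwd_x0_sq_finite
    by (intro sigma_finite_subalgebra.vec_cond_exp_sq_finite[OF sigma_finite_subalgebra_sigma_xn
          finite_measure_fwd]) simp_all
  have Z: "(\<lambda>\<omega>. k *\<^sub>R ?E0 \<omega> + mu_coeff n *\<^sub>R \<omega> n) \<in> borel_measurable sigma_xn"
    by measurable
  have Z2: "(\<integral>\<^sup>+\<omega>. ennreal ((norm (k *\<^sub>R ?E0 \<omega> + mu_coeff n *\<^sub>R \<omega> n))\<^sup>2) \<partial>fwd) < \<infinity>"
    using E0_fin fwd_xn_sq_finite measurable_sigma_xn_imp_traj[OF E0]
    by (intro nn_integral_norm_sq_lincomb_finite) simp_all
  have V: "(\<lambda>\<omega>. \<omega> 0 - ?E0 \<omega>) \<in> borel_measurable traj_space"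
    using measurable_sigma_xn_imp_traj[OF E0] by measurable
  have residual: "mu_tilde \<beta> lam n (\<omega> n) (\<omega> 0) - (k *\<^sub>R ?E0 \<omega> + mu_coeff n *\<^sub>R \<omega> n)
      = k *\<^sub>R (\<omega> 0 - ?E0 \<omega>)" for \<omega>
    by (simp add: mu_tilde_eq k_def vec_eq_iff algebra_simps)
  have "(\<integral>\<^sup>+\<omega>. ennreal ((norm (\<omega> 0 - ?E0 \<omega>))\<^sup>2) \<partial>fwd)
      \<le> (\<integral>\<^sup>+\<omega>. ennreal ((norm (\<omega> 0 - ?mid))\<^sup>2) \<partial>fwd)"
    using fwd_x0_sq_finite prob_space.emeasure_space_1[OF prob_space_fwd]
    by (intro sigma_finite_subalgebra.nn_integral_sq_dist_vec_cond_exp_le[OF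
          sigma_finite_subalgebra_sigma_xn finite_measure_fwd]) (simp_all add: ennreal_mult_less_top)
  also have "\<dots> \<le> ennreal (real CARD('d) * ((b - a) / 2)\<^sup>2)"
    by (rule nn_integral_fwd_x0_dist_midpoint[OF support])
  finally have "opt_var q \<beta> lam N n \<le> (lam n)\<^sup>2 + k\<^sup>2 * ((b - a) / 2)\<^sup>2"
    by (rule opt_var_le_residual[OF Z Z2 V residual]) simp
  moreover have "k = sqrt (alpha_bar \<beta> (n - 1))
      - sqrt (beta_bar \<beta> (n - 1) - (lam n)\<^sup>2) * sqrt (alpha_bar \<beta> n / beta_bar \<beta> n)"
    by (simp add: k_def mu_coeff_def real_sqrt_divide)
  ultimately show ?thesis
    by simp
qed

end

theorem theorem2:
  fixes q :: "real^'d \<Rightarrow> real"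
    and \<beta> lam :: "nat \<Rightarrow> real"
    and N n :: nat
  assumes N_pos: "N \<ge> 1"
    and beta_range: "\<And>k. k \<in> {1..N} \<Longrightarrow> 0 < \<beta> k \<and> \<beta> k < 1"
    and lambda_nonneg: "\<And>k. k \<in> {1..N} \<Longrightarrow> 0 \<le> lam k"
    and lambda_bound: "\<And>k. k \<in> {1..N} \<Longrightarrow> (lam k)\<^sup>2 \<le> beta_bar \<beta> (k - 1)"
    and q_meas: "q \<in> borel_measurable lborel"
    and q_nonneg: "\<And>x. 0 \<le> q x"
    and q_prob: "(\<integral>\<^sup>+ x. ennreal (q x) \<partial>lborel) = 1"
    and q_second_moment: "integrable (density lborel (\<lambda>x. ennreal (q x))) (\<lambda>x. (norm x)\<^sup>2)"
    and n_range: "n \<in> {1..N}"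
  shows "(lam n)\<^sup>2 \<le> opt_var q \<beta> lam N n
       \<and> opt_var q \<beta> lam N n \<le> (lam n)\<^sup>2
            + (sqrt (beta_bar \<beta> n / alpha_s \<beta> n) - sqrt (beta_bar \<beta> (n - 1) - (lam n)\<^sup>2))\<^sup>2
       \<and> (\<forall>a b :: real.
            (AE x in lborel. (\<exists>i. x $ i < a \<or> b < x $ i) \<longrightarrow> q x = 0) \<longrightarrow>
            opt_var q \<beta> lam N n \<le> (lam n)\<^sup>2
              + (sqrt (alpha_bar \<beta> (n - 1))
                 - sqrt (beta_bar \<beta> (n - 1) - (lam n)\<^sup>2) * sqrt (alpha_bar \<beta> n / beta_bar \<beta> n))\<^sup>2
                * ((b - a) / 2)\<^sup>2)"
proof -
  interpret ddim_step \<beta> N q lam n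
    by unfold_locales
       (use beta_range N_pos lambda_nonneg lambda_bound q_meas q_prob q_second_moment n_range in auto)
  show ?thesis
    using lambda_sq_le_opt_var opt_var_le_noise_bound opt_var_le_support_bound by blast
qed

end
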